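(* Let $1\le p,q<\infty$, $\theta>0$, and let $p'$ satisfy $\frac1p+\frac1{p'}=1$. If $g\in l^{q)',\theta}(L^{p'})$, then the multiplication operator $M_gf=gf$ is bounded from $l^{q),\theta}(L^p)$ to $L^1(\mathbb R)$ and $\|M_g\|\le\|g\|_{p',q)',\theta}$.
   Context: Index set $\mathbb Z$, $I_k=[k,k+1)$. The space $l^{q),\theta}(L^p)$ consists of complex-valued measurable $f$ on $\mathbb R$ with $f\chi_{I_k}\in L^p$ for all $k$ and $\|f\|_{p,q),\theta}:=\sup_{\varepsilon>0}\Big(\varepsilon^{\theta}\sum_{k\in\mathbb Z}\big(\int_{I_k}|f|^p\big)^{\frac{q(1+\varepsilon)}{p}}\Big)^{\frac{1}{q(1+\varepsilon)}}<\infty$. The small Lebesgue sequence space $l^{q)',\theta}$ consists of sequences $y=\{y_k\}_{k\in\mathbb Z}$ with $$\|y\|_{l^{q)',\theta}}:=\inf\Big\{\sum_{j\in\mathbb Z}\inf_{\varepsilon>0}\varepsilon^{\frac{-\theta}{q(1+\varepsilon)}}\Big(\sum_{k\in\mathbb Z}y_{k,j}^{(q(1+\varepsilon))'}\Big)^{\frac{1}{(q(1+\varepsilon))'}}\Big\}<\infty,$$ the outer infimum over all decompositions $|y_k|=\sum_{j\in\mathbb Z}y_{k,j}$ with $y_{k,j}\ge0$, and $(q(1+\varepsilon))'$ the conjugate exponent of $q(1+\varepsilon)$. For $1\le r\le\infty$, $l^{q)',\theta}(L^{r})$ consists of measurable $g$ on $\mathbb R$ with $g\chi_{I_k}\in L^{r}$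 for all $k$ and $\|g\|_{r,q)',\theta}:=\big\|\{\|g\chi_{I_k}\|_{L^{r}}\}_{k\in\mathbb Z}\big\|_{l^{q)',\theta}}<\infty$. *)

theory Defs
  imports "HOL-Analysis.Analysis"
begin

definition Ik :: "int \<Rightarrow> real set" where
  "Ik k = {real_of_int k ..< real_of_int k + 1}"

text \<open>Real power of an extended nonnegative real (used only with positive exponents);
  infinity stays infinity.\<close>
definition epow :: "ennreal \<Rightarrow> real \<Rightarrow> ennreal" where
  "epow x a = (if x = top then top else ennreal (enn2real x powr a))"

definition loc_int :: "real \<Rightarrow> (real \<Rightarrow> complex) \<Rightarrow> int \<Rightarrow> ennreal" where
  "loc_int p f k = (\<integral>\<^sup>+ x \<in> Ik k. ennreal (norm (f x) powr p) \<partial>lebesgue)"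

definition loc_esssup :: "(real \<Rightarrow> complex) \<Rightarrow> int \<Rightarrow> ennreal" where
  "loc_esssup g k = Inf {C. AE x in lebesgue. x \<in> Ik k \<longrightarrow> ennreal (norm (g x)) \<le> C}"

definition locL_mem :: "ennreal \<Rightarrow> (real \<Rightarrow> complex) \<Rightarrow> int \<Rightarrow> bool" where
  "locL_mem r g k \<longleftrightarrow> g \<in> borel_measurable lebesgue \<and>
     (if r = top then loc_esssup g k < top else loc_int (enn2real r) g k < top)"

definition locL_norm :: "ennreal \<Rightarrow> (real \<Rightarrow> complex) \<Rightarrow> int \<Rightarrow> real" where
  "locL_norm r g k = enn2real
     (if r = top then loc_esssup g k else epow (loc_int (enn2real r) g k) (1 / enn2real r))"

definition grand_norm :: "real \<Rightarrow> real \<Rightarrow> real \<Rightarrow> (real \<Rightarrow> complex) \<Rightarrow> ennreal" where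
  "grand_norm p q \<theta> f = (SUP \<epsilon> \<in> {0<..}.
      epow (ennreal (\<epsilon> powr \<theta>) *
            infsum (\<lambda>k. epow (loc_int p f k) (q * (1 + \<epsilon>) / p)) UNIV)
           (1 / (q * (1 + \<epsilon>))))"

definition grand_space :: "real \<Rightarrow> real \<Rightarrow> real \<Rightarrow> (real \<Rightarrow> complex) set" where
  "grand_space p q \<theta> = {f. f \<in> borel_measurable lebesgue \<and>
      (\<forall>k. loc_int p f k < top) \<and> grand_norm p q \<theta> f < top}"

definition conj_exp :: "real \<Rightarrow> real" where
  "conj_exp s = s / (s - 1)"

definition decomps :: "(int \<Rightarrow> real) \<Rightarrow> (int \<Rightarrow> int \<Rightarrow> real) set" where
  "decomps y = {Y. (\<forall>k j. 0 \<le> Y k j) \<and> (\<forall>k. ((\<lambda>j. Y k j) has_sum \<bar>y k\<bar>) UNIV)}"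

definition small_norm :: "real \<Rightarrow> real \<Rightarrow> (int \<Rightarrow> real) \<Rightarrow> ennreal" where
  "small_norm q \<theta> y = (INF Y \<in> decomps y.
      infsum (\<lambda>j. INF \<epsilon> \<in> {0<..}.
         ennreal (\<epsilon> powr (- \<theta> / (q * (1 + \<epsilon>)))) *
         epow (infsum (\<lambda>k. ennreal (Y k j powr conj_exp (q * (1 + \<epsilon>)))) UNIV)
              (1 / conj_exp (q * (1 + \<epsilon>)))) UNIV)"

definition small_mixed_norm :: "ennreal \<Rightarrow> real \<Rightarrow> real \<Rightarrow> (real \<Rightarrow> complex) \<Rightarrow> ennreal" where
  "small_mixed_norm r q \<theta> g = small_norm q \<theta> (\<lambda>k. locL_norm r g k)"

definition small_space :: "ennreal \<Rightarrow> real \<Rightarrow> real \<Rightarrow> (real \<Rightarrow> complex) set" where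
  "small_space r q \<theta> = {g. g \<in> borel_measurable lebesgue \<and>
      (\<forall>k. locL_mem r g k) \<and> small_mixed_norm r q \<theta> g < top}"

end

theory Submission
  imports Defs
begin

(* Split the line into the unit intervals I_k.  On each I_k Hoelder's inequality (or, for p = 1,
   the essential supremum bound) gives int_{I_k} |g f| <= b_k a_k, where b_k and a_k are the local
   L^p' norm of g and L^p norm of f.  Given a decomposition b_k = sum_j y_{k,j} and any eps > 0,
   Hoelder's inequality for sequences with the exponents s = q(1+eps) and s' bounds
   sum_k y_{k,j} a_k by ||y_{.,j}||_{s'} ||a||_s <= eps^(-theta/s) ||y_{.,j}||_{s'} ||f||_{p,q),theta}.
   Taking the infimum over eps, summing over j (Tonelli) and taking the infimum over all
   decompositions yields the bound by ||g||_{p',q)',theta} ||f||_{p,q),theta}. *)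

lemma infsum_ennreal_eq_nn_integral:
  fixes f :: "'a \<Rightarrow> ennreal"
  assumes "countable A"
  shows "infsum f A = (\<integral>\<^sup>+x. f x \<partial>count_space A)"
proof (cases "finite A")
  case True
  then show ?thesis by (simp add: nn_integral_count_space_finite)
next
  case infinite: False
  define h where "h = from_nat_into A"
  have bij: "bij_betw h UNIV A"
    unfolding h_def using assms infinite by (rule bij_betw_from_nat_into)
  have "(\<integral>\<^sup>+x. f x \<partial>count_space A) = (\<Sum>n. f (h n))"
    by (simp add: nn_integral_bij_count_space[OF bij, symmetric] nn_integral_count_space_nat)
  also have "\<dots> = (SUP n. \<Sum>i<n. f (h i))"
    by (rule suminf_eq_SUP)
  finally have integral_eq: "(\<integral>\<^sup>+x. f x \<partial>count_space A) = (SUP n. \<Sum>i<n. f (h i))" .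
  have infsum_eq: "infsum f A = (SUP F\<in>{F. finite F \<and> F \<subseteq> A}. sum f F)"
    by (rule nonneg_infsum_complete) simp
  show ?thesis
  proof (rule antisym)
    show "infsum f A \<le> (\<integral>\<^sup>+x. f x \<partial>count_space A)"
      unfolding infsum_eq
    proof (rule SUP_least, clarify)
      fix F assume F: "finite F" "F \<subseteq> A"
      then have "sum f F = (\<integral>\<^sup>+x. f x * indicator F x \<partial>count_space A)"
        by (subst nn_integral_indicator_finite) (auto intro!: sum.cong simp: subset_eq)
      also have "\<dots> \<le> (\<integral>\<^sup>+x. f x \<partial>count_space A)"
        by (intro nn_integral_mono) (auto split: split_indicator)
      finally show "sum f F \<le> (\<integral>\<^sup>+x. f x \<partial>count_space A)" .
    qed
    show "(\<integral>\<^sup>+x. f x \<partial>count_space A) \<le> infsum f A"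
      unfolding integral_eq infsum_eq
    proof (rule SUP_least)
      fix n
      have "inj_on h {..<n}"
        using bij by (metis bij_betw_imp_inj_on inj_on_subset subset_UNIV)
      then have "(\<Sum>i<n. f (h i)) = sum f (h ` {..<n})"
        by (simp add: sum.reindex)
      also have "\<dots> \<le> (SUP F\<in>{F. finite F \<and> F \<subseteq> A}. sum f F)"
        using bij by (intro SUP_upper) (auto simp: bij_betw_def)
      finally show "(\<Sum>i<n. f (h i)) \<le> (SUP F\<in>{F. finite F \<and> F \<subseteq> A}. sum f F)" .
    qed
  qed
qed

lemma ennreal_has_sum_eq_nn_integral:
  fixes y :: "'a \<Rightarrow> real"
  assumes "(y has_sum s) A" "countable A" "\<And>j. j \<in> A \<Longrightarrow> 0 \<le> y j"
  shows "ennreal s = (\<integral>\<^sup>+j. ennreal (y j) \<partial>count_space A)"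
proof -
  have "ennreal s = (SUP F\<in>{F. finite F \<and> F \<subseteq> A}. ennreal (sum y F))"
    using assms by (metis infsum_nonneg_is_SUPREMUM_ennreal has_sum_iff)
  also have "\<dots> = infsum (\<lambda>j. ennreal (y j)) A"
    using assms(3) by (subst nonneg_infsum_complete) (auto intro!: SUP_cong sum_ennreal simp: subset_iff)
  finally show ?thesis
    using assms(2) by (simp add: infsum_ennreal_eq_nn_integral)
qed

lemma AE_le_Inf_AE_bounds:
  fixes f :: "'a \<Rightarrow> ennreal"
  shows "AE x in M. P x \<longrightarrow> f x \<le> Inf {C. AE x in M. P x \<longrightarrow> f x \<le> C}"
proof -
  define S where "S = {C. AE x in M. P x \<longrightarrow> f x \<le> C}"
  have "top \<in> S" unfolding S_def by simp
  then obtain u where u: "\<And>n. u n \<in> S" "u \<longlonglongrightarrow> Inf S"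
    using Inf_as_limit[of S] by blast
  have "AE x in M. \<forall>n. P x \<longrightarrow> f x \<le> u n"
    using u(1) by (subst AE_all_countable) (simp add: S_def)
  then have "AE x in M. P x \<longrightarrow> f x \<le> Inf S"
    by eventually_elim (use LIMSEQ_le_const[OF u(2)] in blast)
  then show ?thesis unfolding S_def .
qed

lemma epow_finite: "x < top \<Longrightarrow> epow x a = ennreal (enn2real x powr a)"
  by (simp add: epow_def)

lemma epow_ennreal_mult:
  assumes "0 < c" "0 < e"
  shows "epow (ennreal c * T) e = ennreal (c powr e) * epow T e"
proof (cases "T = top")
  case True
  then show ?thesis using assms by (simp add: epow_def ennreal_mult_top)
next
  case False
  then obtain t where "T = ennreal t" "0 \<le> t" by (cases T) auto
  then show ?thesis using assms
    by (simp add: epow_def powr_mult enn2real_mult ennreal_mult_eq_top_iff flip: ennreal_mult)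
qed

lemma le_INF_mult_ennreal:
  fixes X G :: ennreal and c :: "'b \<Rightarrow> ennreal"
  assumes "E \<noteq> {}" "G < top" "\<And>e. e \<in> E \<Longrightarrow> X \<le> c e * G"
  shows "X \<le> (INF e\<in>E. c e) * G"
proof (cases "G = 0")
  case True
  with assms(1,3) show ?thesis by force
next
  case False
  with assms(2) obtain \<gamma> where \<gamma>: "G = ennreal \<gamma>" "0 < \<gamma>"
    by (cases G) (auto simp: top_unique)
  have inverse: "ennreal \<gamma> * ennreal (1 / \<gamma>) = 1"
    using \<gamma> by (simp flip: ennreal_mult)
  have "X * ennreal (1 / \<gamma>) \<le> c e" if "e \<in> E" for e
  proof -
    have "X * ennreal (1 / \<gamma>) \<le> c e * G * ennreal (1 / \<gamma>)"
      using assms(3)[OF that] by (rule mult_right_mono) simp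
    also have "\<dots> = c e"
      using inverse \<gamma> by (simp add: mult.assoc)
    finally show ?thesis .
  qed
  then have "X * ennreal (1 / \<gamma>) * G \<le> (INF e\<in>E. c e) * G"
    by (intro mult_right_mono INF_greatest) auto
  then show ?thesis
    using inverse \<gamma> by (simp add: mult_ac)
qed

lemma Youngs_inequality_scaled:
  fixes p q a b u v :: real
  assumes "1 < p" "1 < q" "1/p + 1/q = 1" "0 < a" "0 < b" "0 \<le> u" "0 \<le> v"
  defines "C \<equiv> a powr (1/p) * b powr (1/q)"
  shows "u * v \<le> C / (p * a) * u powr p + C / (q * b) * v powr q"
proof -
  define u' v' where "u' = u / a powr (1/p)" and "v' = v / b powr (1/q)"
  have "u' * v' \<le> u' powr p / p + v' powr q / q"
    using assms by (intro Youngs_inequality) (auto simp: u'_def v'_def)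
  moreover have "u' powr p = u powr p / a" "v' powr q = v powr q / b"
    using assms by (simp_all add: u'_def v'_def powr_divide powr_powr)
  moreover have "u * v = C * (u' * v')"
    using assms by (simp add: u'_def v'_def C_def)
  moreover have "0 < C"
    using assms by (simp add: C_def)
  ultimately have "u' * v' \<le> u powr p / (p * a) + v powr q / (q * b)"
    by (simp add: ac_simps)
  then have "u * v \<le> C * (u powr p / (p * a) + v powr q / (q * b))"
    using \<open>u * v = C * (u' * v')\<close> \<open>0 < C\<close> by (simp add: mult_left_mono)
  then show ?thesis
    by (simp add: field_simps)
qed

lemma AE_zero_of_nn_integral_powr_zero:
  fixes f :: "'a \<Rightarrow> real"
  assumes "f \<in> borel_measurable M" "\<And>x. 0 \<le> f x" "0 < p"
    and "(\<integral>\<^sup>+x. ennreal (f x powr p) \<partial>M) = 0"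
  shows "AE x in M. f x = 0"
proof -
  have "AE x in M. ennreal (f x powr p) = 0"
    using assms(1,4) by (subst (asm) nn_integral_0_iff_AE) auto
  then show ?thesis
    by eventually_elim (use assms(2) in simp)
qed

lemma Holder_inequality_nn_integral:
  fixes f g :: "'a \<Rightarrow> real"
  assumes [measurable]: "f \<in> borel_measurable M" "g \<in> borel_measurable M"
    and f: "\<And>x. 0 \<le> f x" and g: "\<And>x. 0 \<le> g x"
    and p: "1 < p" and q: "1 < q" and pq: "1/p + 1/q = 1"
  shows "(\<integral>\<^sup>+x. ennreal (f x * g x) \<partial>M) \<le>
    epow (\<integral>\<^sup>+x. ennreal (f x powr p) \<partial>M) (1/p) * epow (\<integral>\<^sup>+x. ennreal (g x powr q) \<partial>M) (1/q)"
proof -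
  define A where "A = (\<integral>\<^sup>+x. ennreal (f x powr p) \<partial>M)"
  define B where "B = (\<integral>\<^sup>+x. ennreal (g x powr q) \<partial>M)"
  have epow_pos: "0 < epow X e" if "X \<noteq> 0" "0 < e" for X e
    using that by (cases X) (auto simp: epow_def)
  consider "A = 0 \<or> B = 0" | "A \<noteq> 0" "B \<noteq> 0" "A = top \<or> B = top"
    | a b where "A = ennreal a" "B = ennreal b" "0 < a" "0 < b"
    by (cases A; cases B) (auto simp: le_less)
  then have "(\<integral>\<^sup>+x. ennreal (f x * g x) \<partial>M) \<le> epow A (1/p) * epow B (1/q)"
  proof cases
    case 1
    then have "AE x in M. f x * g x = 0"
      using AE_zero_of_nn_integral_powr_zero[of f M p] AE_zero_of_nn_integral_powr_zero[of g M q]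
        f g p q by (auto simp: A_def B_def elim: eventually_mono)
    then have "(\<integral>\<^sup>+x. ennreal (f x * g x) \<partial>M) = 0"
      by (subst nn_integral_0_iff_AE) (auto elim: eventually_mono)
    then show ?thesis by simp
  next
    case 2
    then have "epow A (1/p) * epow B (1/q) = top"
      using epow_pos[of A "1/p"] epow_pos[of B "1/q"] p q
      by (auto simp: epow_def ennreal_mult_eq_top_iff)
    then show ?thesis by simp
  next
    case (3 a b)
    define C where "C = a powr (1/p) * b powr (1/q)"
    have "(\<integral>\<^sup>+x. ennreal (f x * g x) \<partial>M) \<le>
        (\<integral>\<^sup>+x. ennreal (C / (p * a)) * ennreal (f x powr p) + ennreal (C / (q * b)) * ennreal (g x powr q) \<partial>M)"
      using Youngs_inequality_scaled[OF p q pq \<open>0 < a\<close> \<open>0 < b\<close> f g] 3 p q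
      by (intro nn_integral_mono)
        (simp add: C_def ennreal_leI flip: ennreal_mult ennreal_plus)
    also have "\<dots> = ennreal (C / (p * a)) * A + ennreal (C / (q * b)) * B"
      by (simp add: A_def B_def nn_integral_add nn_integral_cmult)
    also have "\<dots> = ennreal (C / p + C / q)"
      using 3 p q by (simp add: C_def flip: ennreal_mult ennreal_plus)
    also have "C / p + C / q = C"
      using pq by (metis mult.right_neutral times_divide_eq_right distrib_left)
    also have "ennreal C = epow A (1/p) * epow B (1/q)"
      using 3 by (simp add: C_def epow_def ennreal_mult)
    finally show ?thesis .
  qed
  then show ?thesis
    unfolding A_def B_def .
qed

lemma conjugate_exponent_cases:
  fixes p :: real and p' :: ennreal
  assumes "1 \<le> p" and conj: "1 / ennreal p + 1 / p' = 1"
  obtains "p = 1" "p' = top"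
    | r where "1 < p" "p' = ennreal r" "1 < r" "1/p + 1/r = 1"
proof (cases "p = 1")
  case True
  then have "1 / p' = 0"
    using conj ennreal_add_left_cancel[of 1 "1/p'" 0] by simp
  then show ?thesis
    using True that(1) by (simp add: ennreal_divide_eq_0_iff)
next
  case False
  with assms(1) have p: "1 < p" by simp
  have inverse_p: "1 / ennreal p = ennreal (1/p)"
    using p divide_ennreal[of 1 p] by simp
  have "p' \<noteq> top"
    using conj inverse_p p by auto
  moreover have "p' \<noteq> 0"
    using conj by (auto simp: ennreal_divide_zero)
  ultimately obtain r where r: "p' = ennreal r" "0 < r"
    by (cases p') (auto simp: le_less)
  then have "1 / p' = ennreal (1/r)"
    using divide_ennreal[of 1 r] by simp
  then have "ennreal (1/p + 1/r) = 1"
    using conj inverse_p p r by (subst ennreal_plus) auto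
  then have conj_real: "1/p + 1/r = 1"
    by simp
  moreover have "1 < r"
  proof -
    have "0 < 1/p"
      using p by simp
    then have "1/r < 1"
      using conj_real by linarith
    then show ?thesis
      using r by (simp add: field_simps)
  qed
  ultimately show ?thesis
    using that(2) p r by blast
qed

lemma Ik_sets [measurable]: "Ik k \<in> sets lebesgue"
  by (simp add: Ik_def)

lemma nn_integral_split_Ik:
  fixes h :: "real \<Rightarrow> ennreal"
  assumes [measurable]: "h \<in> borel_measurable lebesgue"
  shows "(\<integral>\<^sup>+x. h x \<partial>lebesgue) = (\<integral>\<^sup>+k. (\<integral>\<^sup>+x\<in>Ik k. h x \<partial>lebesgue) \<partial>count_space UNIV)"
proof -
  have Ik_indicator: "indicator (Ik k) x = (indicator {\<lfloor>x\<rfloor>} k :: ennreal)" for k x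
    unfolding Ik_def indicator_def using floor_eq_iff[of x k] by auto
  have "(\<integral>\<^sup>+x. h x \<partial>lebesgue) = (\<integral>\<^sup>+x. (\<integral>\<^sup>+k. h x * indicator (Ik k) x \<partial>count_space UNIV) \<partial>lebesgue)"
    by (intro nn_integral_cong) (simp add: Ik_indicator nn_integral_cmult_indicator)
  also have "\<dots> = (\<integral>\<^sup>+k. (\<integral>\<^sup>+x. h x * indicator (Ik k) x \<partial>lebesgue) \<partial>count_space UNIV)"
    by (rule nn_integral_count_space_nn_integral) auto
  finally show ?thesis .
qed

lemma loc_esssup_AE: "AE x in lebesgue. x \<in> Ik k \<longrightarrow> ennreal (norm (g x)) \<le> loc_esssup g k"
  unfolding loc_esssup_def by (rule AE_le_Inf_AE_bounds)

lemma locL_norm_nonneg [simp]: "0 \<le> locL_norm r g k"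
  by (simp add: locL_norm_def)

lemma ennreal_locL_norm:
  assumes "locL_mem r g k"
  shows "ennreal (locL_norm r g k) =
    (if r = top then loc_esssup g k else epow (loc_int (enn2real r) g k) (1 / enn2real r))"
  using assms by (simp add: locL_norm_def locL_mem_def epow_finite)

lemma locL_mem_ennreal:
  "0 \<le> p \<Longrightarrow> locL_mem (ennreal p) f k \<longleftrightarrow> f \<in> borel_measurable lebesgue \<and> loc_int p f k < top"
  by (simp add: locL_mem_def)

lemma nn_integral_Ik_norm_mult_le_esssup:
  assumes "f \<in> borel_measurable lebesgue"
  shows "(\<integral>\<^sup>+x\<in>Ik k. ennreal (norm (g x * f x)) \<partial>lebesgue) \<le> loc_esssup g k * loc_int 1 f k"
proof -
  have "(\<integral>\<^sup>+x\<in>Ik k. ennreal (norm (g x * f x)) \<partial>lebesgue) \<le>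
      (\<integral>\<^sup>+x. loc_esssup g k * (ennreal (norm (f x)) * indicator (Ik k) x) \<partial>lebesgue)"
    using loc_esssup_AE[of k g]
    by (intro nn_integral_mono_AE, eventually_elim)
      (auto simp: norm_mult ennreal_mult intro: mult_right_mono split: split_indicator)
  also have "\<dots> = loc_esssup g k * loc_int 1 f k"
    using assms unfolding loc_int_def by (subst nn_integral_cmult) auto
  finally show ?thesis .
qed

lemma nn_integral_Ik_norm_mult_Holder:
  assumes [measurable]: "f \<in> borel_measurable lebesgue" "g \<in> borel_measurable lebesgue"
    and "1 < p" "1 < r" "1/r + 1/p = 1"
  shows "(\<integral>\<^sup>+x\<in>Ik k. ennreal (norm (g x * f x)) \<partial>lebesgue) \<le>
    epow (loc_int r g k) (1/r) * epow (loc_int p f k) (1/p)"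
proof -
  have restrict: "(\<integral>\<^sup>+x. ennreal ((norm (h x) * indicator (Ik k) x) powr s) \<partial>lebesgue) = loc_int s h k"
    for h :: "real \<Rightarrow> complex" and s
    unfolding loc_int_def by (intro nn_integral_cong) (auto split: split_indicator)
  have "(\<integral>\<^sup>+x\<in>Ik k. ennreal (norm (g x * f x)) \<partial>lebesgue) =
      (\<integral>\<^sup>+x. ennreal ((norm (g x) * indicator (Ik k) x) * (norm (f x) * indicator (Ik k) x)) \<partial>lebesgue)"
    by (intro nn_integral_cong) (auto simp: norm_mult split: split_indicator)
  also have "\<dots> \<le> epow (\<integral>\<^sup>+x. ennreal ((norm (g x) * indicator (Ik k) x) powr r) \<partial>lebesgue) (1/r) *
      epow (\<integral>\<^sup>+x. ennreal ((norm (f x) * indicator (Ik k) x) powr p) \<partial>lebesgue) (1/p)"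
    by (rule Holder_inequality_nn_integral) (use assms(3-5) in auto)
  also have "\<dots> = epow (loc_int r g k) (1/r) * epow (loc_int p f k) (1/p)"
    by (simp only: restrict)
  finally show ?thesis .
qed

lemma nn_integral_Ik_norm_mult_le_locL_norm:
  fixes p :: real and p' :: ennreal
  assumes "1 \<le> p" "1 / ennreal p + 1 / p' = 1"
    and g: "locL_mem p' g k" and f: "locL_mem (ennreal p) f k"
  shows "(\<integral>\<^sup>+x\<in>Ik k. ennreal (norm (g x * f x)) \<partial>lebesgue) \<le>
    ennreal (locL_norm p' g k) * ennreal (locL_norm (ennreal p) f k)"
proof -
  have [measurable]: "f \<in> borel_measurable lebesgue" "g \<in> borel_measurable lebesgue"
    using f g by (auto simp: locL_mem_def)
  have norm_f: "ennreal (locL_norm (ennreal p) f k) = epow (loc_int p f k) (1/p)"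
    using ennreal_locL_norm[OF f] assms(1) by simp
  from assms(1,2) show ?thesis
  proof (cases rule: conjugate_exponent_cases)
    case 1
    then have "loc_int p f k = epow (loc_int p f k) (1/p)"
      using f by (simp add: locL_mem_def epow_finite)
    then show ?thesis
      using 1 nn_integral_Ik_norm_mult_le_esssup[of f g k] ennreal_locL_norm[OF g] norm_f
      by simp
  next
    case (2 r)
    then show ?thesis
      using nn_integral_Ik_norm_mult_Holder[of f g p r k] ennreal_locL_norm[OF g] norm_f
      by (simp add: add.commute)
  qed
qed

definition grand_seq_norm :: "real \<Rightarrow> real \<Rightarrow> (int \<Rightarrow> real) \<Rightarrow> ennreal" where
  "grand_seq_norm q \<theta> a = (SUP \<epsilon> \<in> {0<..}.
      epow (ennreal (\<epsilon> powr \<theta>) * infsum (\<lambda>k. ennreal (\<bar>a k\<bar> powr (q * (1 + \<epsilon>)))) UNIV)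
           (1 / (q * (1 + \<epsilon>))))"

lemma grand_norm_eq_grand_seq_norm:
  assumes "0 < p" "\<And>k. loc_int p f k < top"
  shows "grand_norm p q \<theta> f = grand_seq_norm q \<theta> (locL_norm (ennreal p) f)"
proof -
  have "epow (loc_int p f k) (s / p) = ennreal (\<bar>locL_norm (ennreal p) f k\<bar> powr s)" for k s
    using assms by (simp add: locL_norm_def epow_finite powr_powr)
  then show ?thesis
    unfolding grand_norm_def grand_seq_norm_def by simp
qed

lemma grand_seq_norm_lower_bound:
  assumes "0 < \<epsilon>" "0 < q"
  defines "s \<equiv> q * (1 + \<epsilon>)"
  shows "ennreal (\<epsilon> powr (\<theta> / s)) * epow (\<integral>\<^sup>+k. ennreal (\<bar>a k\<bar> powr s) \<partial>count_space UNIV) (1 / s)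
    \<le> grand_seq_norm q \<theta> a"
proof -
  have "0 < s"
    using assms by (simp add: s_def)
  then have "ennreal (\<epsilon> powr (\<theta> / s)) * epow (\<integral>\<^sup>+k. ennreal (\<bar>a k\<bar> powr s) \<partial>count_space UNIV) (1 / s)
      = epow (ennreal (\<epsilon> powr \<theta>) * infsum (\<lambda>k. ennreal (\<bar>a k\<bar> powr s)) UNIV) (1 / s)"
    using assms(1) by (simp add: epow_ennreal_mult powr_powr infsum_ennreal_eq_nn_integral)
  also have "\<dots> \<le> grand_seq_norm q \<theta> a"
    unfolding grand_seq_norm_def s_def using assms(1) by (intro SUP_upper) auto
  finally show ?thesis .
qed

lemma nn_integral_mult_le_grand_seq_norm:
  assumes "1 \<le> q" "0 < \<epsilon>" "\<And>k. 0 \<le> y k"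
  defines "s \<equiv> q * (1 + \<epsilon>)"
  shows "(\<integral>\<^sup>+k. ennreal (y k) * ennreal \<bar>a k\<bar> \<partial>count_space UNIV) \<le>
    ennreal (\<epsilon> powr (- \<theta> / s)) * epow (infsum (\<lambda>k. ennreal (y k powr conj_exp s)) UNIV) (1 / conj_exp s)
    * grand_seq_norm q \<theta> a"
proof -
  define Y where "Y = epow (\<integral>\<^sup>+k. ennreal (y k powr conj_exp s) \<partial>count_space UNIV) (1 / conj_exp s)"
  define T where "T = epow (\<integral>\<^sup>+k. ennreal (\<bar>a k\<bar> powr s) \<partial>count_space UNIV) (1 / s)"
  have s: "1 < s"
    using assms(1,2) by (simp add: s_def) (smt (verit) mult_less_cancel_left1)
  have s': "1 < conj_exp s" "1 / conj_exp s + 1 / s = 1"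
    using s by (simp_all add: conj_exp_def field_simps)
  have "T = ennreal (\<epsilon> powr (- \<theta> / s)) * (ennreal (\<epsilon> powr (\<theta> / s)) * T)"
    using assms(2) by (simp add: mult.assoc[symmetric] powr_add[symmetric] flip: ennreal_mult)
  also have "\<dots> \<le> ennreal (\<epsilon> powr (- \<theta> / s)) * grand_seq_norm q \<theta> a"
    using grand_seq_norm_lower_bound[of \<epsilon> q \<theta> a] assms(1,2)
    by (intro mult_left_mono) (simp_all add: T_def s_def)
  finally have T_bound: "T \<le> ennreal (\<epsilon> powr (- \<theta> / s)) * grand_seq_norm q \<theta> a" .
  have "(\<integral>\<^sup>+k. ennreal (y k) * ennreal \<bar>a k\<bar> \<partial>count_space UNIV) =
      (\<integral>\<^sup>+k. ennreal (y k * \<bar>a k\<bar>) \<partial>count_space UNIV)"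
    using assms(3) by (simp add: ennreal_mult)
  also have "\<dots> \<le> Y * T"
    unfolding Y_def T_def using s s' assms(3) by (intro Holder_inequality_nn_integral) auto
  also have "\<dots> \<le> Y * (ennreal (\<epsilon> powr (- \<theta> / s)) * grand_seq_norm q \<theta> a)"
    using T_bound by (rule mult_left_mono) simp
  finally show ?thesis
    by (simp add: Y_def infsum_ennreal_eq_nn_integral mult_ac)
qed

lemma decomps_nonempty: "decomps y \<noteq> {}"
proof -
  have "((\<lambda>j. if j = 0 then \<bar>y k\<bar> else 0) has_sum \<bar>y k\<bar>) UNIV" for k
    by (rule has_sum_cong_neutral[where T = "{0}" and g = "\<lambda>_. \<bar>y k\<bar>", THEN iffD2])
      (auto intro: has_sum_finiteI)
  then have "(\<lambda>k j. if j = 0 then \<bar>y k\<bar> else 0) \<in> decomps y"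
    by (auto simp: decomps_def)
  then show ?thesis
    by blast
qed

lemma nn_integral_mult_le_small_norm_grand_seq_norm:
  assumes q: "1 \<le> q" and finite: "grand_seq_norm q \<theta> a < top"
  shows "(\<integral>\<^sup>+k. ennreal \<bar>b k\<bar> * ennreal \<bar>a k\<bar> \<partial>count_space UNIV)
    \<le> small_norm q \<theta> b * grand_seq_norm q \<theta> a"
  unfolding small_norm_def
proof (rule le_INF_mult_ennreal[OF decomps_nonempty finite])
  fix Y assume "Y \<in> decomps b"
  then have Y: "\<And>k j. 0 \<le> Y k j" and sums: "\<And>k. ((\<lambda>j. Y k j) has_sum \<bar>b k\<bar>) UNIV"
    by (auto simp: decomps_def)
  define c where "c j \<epsilon> = ennreal (\<epsilon> powr (- \<theta> / (q * (1 + \<epsilon>)))) *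
    epow (infsum (\<lambda>k. ennreal (Y k j powr conj_exp (q * (1 + \<epsilon>)))) UNIV) (1 / conj_exp (q * (1 + \<epsilon>)))"
    for j and \<epsilon> :: real
  have "(\<integral>\<^sup>+k. ennreal \<bar>b k\<bar> * ennreal \<bar>a k\<bar> \<partial>count_space UNIV) =
      (\<integral>\<^sup>+k. (\<integral>\<^sup>+j. ennreal (Y k j) * ennreal \<bar>a k\<bar> \<partial>count_space UNIV) \<partial>count_space UNIV)"
    using ennreal_has_sum_eq_nn_integral[OF sums] Y by (simp add: nn_integral_multc)
  also have "\<dots> = (\<integral>\<^sup>+j. (\<integral>\<^sup>+k. ennreal (Y k j) * ennreal \<bar>a k\<bar> \<partial>count_space UNIV) \<partial>count_space UNIV)"
    by (rule nn_integral_count_space_nn_integral[symmetric]) auto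
  also have "\<dots> \<le> (\<integral>\<^sup>+j. (INF \<epsilon>\<in>{0<..}. c j \<epsilon>) * grand_seq_norm q \<theta> a \<partial>count_space UNIV)"
    using q Y unfolding c_def
    by (intro nn_integral_mono le_INF_mult_ennreal finite nn_integral_mult_le_grand_seq_norm) auto
  also have "\<dots> = infsum (\<lambda>j. INF \<epsilon>\<in>{0<..}. c j \<epsilon>) UNIV * grand_seq_norm q \<theta> a"
    by (simp add: nn_integral_multc infsum_ennreal_eq_nn_integral)
  finally show "(\<integral>\<^sup>+k. ennreal \<bar>b k\<bar> * ennreal \<bar>a k\<bar> \<partial>count_space UNIV)
    \<le> infsum (\<lambda>j. INF \<epsilon>\<in>{0<..}. c j \<epsilon>) UNIV * grand_seq_norm q \<theta> a" .
qed

theorem theorem4p2: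
  fixes p q \<theta> :: real and p' :: ennreal and g :: "real \<Rightarrow> complex"
  assumes "1 \<le> p" and "1 \<le> q" and "0 < \<theta>"
    and "1 / ennreal p + 1 / p' = 1"
    and "g \<in> small_space p' q \<theta>"
  shows "\<forall>f \<in> grand_space p q \<theta>.
           integrable lebesgue (\<lambda>x. g x * f x) \<and>
           (\<integral>\<^sup>+ x. ennreal (norm (g x * f x)) \<partial>lebesgue)
             \<le> small_mixed_norm p' q \<theta> g * grand_norm p q \<theta> f"
proof
  (* The argument works for every real theta. *)
  fix f assume "f \<in> grand_space p q \<theta>"
  then have [measurable]: "f \<in> borel_measurable lebesgue" and f: "\<And>k. loc_int p f k < top"
    and f_norm: "grand_norm p q \<theta> f < top"
    by (auto simp: grand_space_def)
  have [measurable]: "g \<in> borel_measurable lebesgue" and g: "\<And>k. locL_mem p' g k"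
    and g_norm: "small_mixed_norm p' q \<theta> g < top"
    using assms(5) by (auto simp: small_space_def)
  have grand: "grand_norm p q \<theta> f = grand_seq_norm q \<theta> (locL_norm (ennreal p) f)"
    using assms(1) f by (intro grand_norm_eq_grand_seq_norm) auto
  have "(\<integral>\<^sup>+x. ennreal (norm (g x * f x)) \<partial>lebesgue)
      = (\<integral>\<^sup>+k. (\<integral>\<^sup>+x\<in>Ik k. ennreal (norm (g x * f x)) \<partial>lebesgue) \<partial>count_space UNIV)"
    by (rule nn_integral_split_Ik) measurable
  also have "\<dots> \<le> (\<integral>\<^sup>+k. ennreal \<bar>locL_norm p' g k\<bar> * ennreal \<bar>locL_norm (ennreal p) f k\<bar> \<partial>count_space UNIV)"
    using assms(1,4) g f
    by (intro nn_integral_mono) (simp add: nn_integral_Ik_norm_mult_le_locL_norm locL_mem_ennreal)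
  also have "\<dots> \<le> small_mixed_norm p' q \<theta> g * grand_norm p q \<theta> f"
    using assms(2) f_norm unfolding small_mixed_norm_def grand
    by (intro nn_integral_mult_le_small_norm_grand_seq_norm)
  finally have bound: "(\<integral>\<^sup>+x. ennreal (norm (g x * f x)) \<partial>lebesgue)
      \<le> small_mixed_norm p' q \<theta> g * grand_norm p q \<theta> f" .
  moreover have "integrable lebesgue (\<lambda>x. g x * f x)"
    using bound f_norm g_norm
    by (intro integrableI_bounded) (auto simp: ennreal_mult_less_top le_less_trans)
  ultimately show "integrable lebesgue (\<lambda>x. g x * f x) \<and>
      (\<integral>\<^sup>+x. ennreal (norm (g x * f x)) \<partial>lebesgue) \<le> small_mixed_norm p' q \<theta> g * grand_norm p q \<theta> f"
    by blast
qed

end
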